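(* For every two-player stage game $G$: if $G\in\mathcal{G}_{LS}^{p,p}$ then $G\in\mathcal{G}_{LS}^{m,p}$; that is, $\mathcal{G}_{LS}^{p,p}\subseteq\mathcal{G}_{LS}^{m,p}$.
   Context: A two-player stage game $G$ has finite nonempty action sets $A_1,A_2$ and payoffs $u_1,u_2:A_1\times A_2\to\mathbb{R}$, extended to mixed strategies by expectation. $G(T)$ is the $T$-round repetition with realized actions observed each round and payoffs the expected sum of stage payoffs; an SPE of $G(T)$ is a strategy profile whose continuation after every history of length $k<T$ is a Nash equilibrium of $G(T-k)$. Regimes: pure-pure ($p,p$): both players restricted to actions (in the stage game and in every round, including deviations); mixed-pure ($m,p$): player 1 may mix, player 2 uses only actions; mixed-mixed ($m,m$): both may mix. For regime $r$, $\mathrm{Nash}^r(G)$ is the set of stage-game profiles available in $r$ from which no player can profitably deviate unilaterally to a strategy available in $r$. Locally suboptimal behavior occurs in an SPE $\mu$ of $G(T)$ (regime $r$) if for some history $h$ of length $k<T$, $(\mu_1(h),\mu_2(h))\notin\mathrm{Nash}^r(G)$. $\mathcal{G}_{LS}^r$ is the set of stage games $G$ for which there exist $T\ge1$ and an SPE of $G(T)$ in regime $r$ in which locally suboptimal behavior occurs. *)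

theory Defs
  imports "HOL-Probability.Probability_Mass_Function"
begin

text \<open>Regimes: PP = pure-pure, MP = mixed-pure (player 1 may mix), MM = mixed-mixed.\<close>
datatype regime = PP | MP | MM

definition avail :: "bool \<Rightarrow> 'a pmf set" where
  "avail mix = (if mix then UNIV else range return_pmf)"

definition mixes1 :: "regime \<Rightarrow> bool" where
  "mixes1 r = (r = MP \<or> r = MM)"

definition mixes2 :: "regime \<Rightarrow> bool" where
  "mixes2 r = (r = MM)"

definition stage_payoff :: "('a \<Rightarrow> 'b \<Rightarrow> real) \<Rightarrow> 'a pmf \<Rightarrow> 'b pmf \<Rightarrow> real" where
  "stage_payoff u p q = measure_pmf.expectation (pair_pmf p q) (\<lambda>(a, b). u a b)"

definition NashStage :: "regime \<Rightarrow> ('a \<Rightarrow> 'b \<Rightarrow> real) \<Rightarrow> ('a \<Rightarrow> 'b \<Rightarrow> real)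
    \<Rightarrow> ('a pmf \<times> 'b pmf) set" where
  "NashStage r u1 u2 = {(p, q). p \<in> avail (mixes1 r) \<and> q \<in> avail (mixes2 r) \<and>
      (\<forall>p' \<in> avail (mixes1 r). stage_payoff u1 p' q \<le> stage_payoff u1 p q) \<and>
      (\<forall>q' \<in> avail (mixes2 r). stage_payoff u2 p q' \<le> stage_payoff u2 p q)}"

text \<open>Histories are lists of realized action pairs in chronological order.
  Expected total payoff of the remaining n rounds, starting at history h.\<close>
fun val :: "('a \<Rightarrow> 'b \<Rightarrow> real) \<Rightarrow> (('a \<times> 'b) list \<Rightarrow> 'a pmf)
    \<Rightarrow> (('a \<times> 'b) list \<Rightarrow> 'b pmf) \<Rightarrow> ('a \<times> 'b) list \<Rightarrow> nat \<Rightarrow> real" where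
  "val u s1 s2 h 0 = 0"
| "val u s1 s2 h (Suc n) =
     measure_pmf.expectation (pair_pmf (s1 h) (s2 h))
       (\<lambda>(a, b). u a b + val u s1 s2 (h @ [(a, b)]) n)"

definition strat_ok :: "bool \<Rightarrow> (('a \<times> 'b) list \<Rightarrow> 'c pmf) \<Rightarrow> bool" where
  "strat_ok mix s = (\<forall>h. s h \<in> avail mix)"

definition NashRep :: "regime \<Rightarrow> ('a \<Rightarrow> 'b \<Rightarrow> real) \<Rightarrow> ('a \<Rightarrow> 'b \<Rightarrow> real) \<Rightarrow> nat
    \<Rightarrow> (('a \<times> 'b) list \<Rightarrow> 'a pmf) \<Rightarrow> (('a \<times> 'b) list \<Rightarrow> 'b pmf) \<Rightarrow> bool" where
  "NashRep r u1 u2 n s1 s2 \<longleftrightarrow>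
     strat_ok (mixes1 r) s1 \<and> strat_ok (mixes2 r) s2 \<and>
     (\<forall>s1'. strat_ok (mixes1 r) s1' \<longrightarrow> val u1 s1' s2 [] n \<le> val u1 s1 s2 [] n) \<and>
     (\<forall>s2'. strat_ok (mixes2 r) s2' \<longrightarrow> val u2 s1 s2' [] n \<le> val u2 s1 s2 [] n)"

definition SPE :: "regime \<Rightarrow> ('a \<Rightarrow> 'b \<Rightarrow> real) \<Rightarrow> ('a \<Rightarrow> 'b \<Rightarrow> real) \<Rightarrow> nat
    \<Rightarrow> (('a \<times> 'b) list \<Rightarrow> 'a pmf) \<Rightarrow> (('a \<times> 'b) list \<Rightarrow> 'b pmf) \<Rightarrow> bool" where
  "SPE r u1 u2 T s1 s2 \<longleftrightarrow>
     (\<forall>h. length h < T \<longrightarrow>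
        NashRep r u1 u2 (T - length h) (\<lambda>h'. s1 (h @ h')) (\<lambda>h'. s2 (h @ h')))"

definition G_LS :: "regime \<Rightarrow> ('a \<Rightarrow> 'b \<Rightarrow> real) \<Rightarrow> ('a \<Rightarrow> 'b \<Rightarrow> real) \<Rightarrow> bool" where
  "G_LS r u1 u2 \<longleftrightarrow>
     (\<exists>T s1 s2. T \<ge> 1 \<and> SPE r u1 u2 T s1 s2 \<and>
        (\<exists>h. length h < T \<and> (s1 h, s2 h) \<notin> NashStage r u1 u2))"

end

theory Submission
  imports Defs
begin

text \<open>A pure-pure SPE is made of pure strategies, so it is still a profile of the mixed-pure
  regime, and at the history where it is locally suboptimal the pure stage profile is not a
  mixed-pure stage equilibrium either (the pure deviations are among the mixed ones). By backward induction on
  the number of remaining rounds, no strategy of player 1 whatsoever improves on the equilibrium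
  continuation value: against the pure action of player 2, a mixed first move is an average of
  pure first moves, each of which is no better than the equilibrium by the pure-pure Nash
  condition, and later rounds are handled by induction.\<close>

lemma val_append:
  "val u (\<lambda>g. s1 (h @ g)) (\<lambda>g. s2 (h @ g)) g n = val u s1 s2 (h @ g) n"
proof (induction n arbitrary: g)
  case 0
  then show ?case by simp
next
  case (Suc n)
  show ?case using Suc.IH[of "g @ [_]"] by (simp add: case_prod_beta)
qed

lemma val_eq_continuation:
  "val u s1 s2 h n = val u (\<lambda>g. s1 (h @ g)) (\<lambda>g. s2 (h @ g)) [] n"
  using val_append[of u s1 h s2 "[]" n] by simp

lemma expectation_mono_finite:
  fixes f g :: "'c::finite \<Rightarrow> real"
  assumes "\<And>x. x \<in> set_pmf p \<Longrightarrow> f x \<le> g x"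
  shows "measure_pmf.expectation p f \<le> measure_pmf.expectation p g"
  using assms
  by (intro integral_mono_AE) (auto simp: integrable_measure_pmf_finite AE_measure_pmf_iff)

lemma SPE_PP_pure:
  assumes "SPE PP u1 u2 T s1 s2" and "T \<ge> 1"
  shows "s1 h \<in> range return_pmf" and "s2 h \<in> range return_pmf"
proof -
  have "NashRep PP u1 u2 T (\<lambda>g. s1 ([] @ g)) (\<lambda>g. s2 ([] @ g))"
    using assms unfolding SPE_def by (metis diff_zero less_le_trans less_one list.size(3))
  then show "s1 h \<in> range return_pmf" and "s2 h \<in> range return_pmf"
    by (auto simp: NashRep_def strat_ok_def avail_def mixes1_def mixes2_def)
qed

lemma SPE_PP_pure_deviation:
  assumes spe: "SPE PP u1 u2 T s1 s2"
    and pure1: "\<And>g. s1 g \<in> range return_pmf"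
    and s2h: "s2 h = return_pmf b"
    and len: "T - length h = Suc m"
  shows "u1 a b + val u1 s1 s2 (h @ [(a, b)]) m \<le> val u1 s1 s2 h (Suc m)"
proof -
  define s1a where "s1a = s1(h := return_pmf a)"
  have nash: "NashRep PP u1 u2 (Suc m) (\<lambda>g. s1 (h @ g)) (\<lambda>g. s2 (h @ g))"
    using spe len unfolding SPE_def by (metis Suc_neq_Zero diff_is_0_eq' not_le)
  have "strat_ok (mixes1 PP) (\<lambda>g. s1a (h @ g))"
    using pure1 by (auto simp: strat_ok_def avail_def mixes1_def s1a_def)
  then have "val u1 s1a s2 h (Suc m) \<le> val u1 s1 s2 h (Suc m)"
    using nash unfolding NashRep_def val_eq_continuation[of u1 _ s2 h] by blast
  moreover have "val u1 s1a s2 (h @ [(a, b)]) m = val u1 s1 s2 (h @ [(a, b)]) m"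
    by (subst (1 2) val_eq_continuation) (simp add: s1a_def)
  ultimately show ?thesis
    by (simp add: s1a_def s2h)
qed

lemma SPE_PP_no_profitable_deviation:
  fixes u1 u2 :: "'a::finite \<Rightarrow> 'b::finite \<Rightarrow> real"
  assumes spe: "SPE PP u1 u2 T s1 s2"
    and pure1: "\<And>g. s1 g \<in> range return_pmf"
    and pure2: "\<And>g. s2 g \<in> range return_pmf"
  shows "length h + m = T \<Longrightarrow> val u1 s1' s2 h m \<le> val u1 s1 s2 h m"
proof (induction m arbitrary: h)
  case 0
  then show ?case by simp
next
  case (Suc m)
  obtain b where b: "s2 h = return_pmf b"
    using pure2[of h] by auto
  have IH: "val u1 s1' s2 (h @ [ab]) m \<le> val u1 s1 s2 (h @ [ab]) m" for ab
    using Suc.prems by (intro Suc.IH) auto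
  have "val u1 s1' s2 h (Suc m) \<le> measure_pmf.expectation (pair_pmf (s1' h) (s2 h))
          (\<lambda>(a, b). u1 a b + val u1 s1 s2 (h @ [(a, b)]) m)"
    by (simp, rule expectation_mono_finite) (auto intro: IH)
  also have "\<dots> \<le> val u1 s1 s2 h (Suc m)"
    using SPE_PP_pure_deviation[OF spe pure1 b] Suc.prems
    by (intro measure_pmf.integral_le_const)
       (auto simp: b integrable_measure_pmf_finite AE_measure_pmf_iff)
  finally show ?case .
qed

lemma SPE_PP_imp_SPE_MP:
  fixes u1 u2 :: "'a::finite \<Rightarrow> 'b::finite \<Rightarrow> real"
  assumes spe: "SPE PP u1 u2 T s1 s2" and "T \<ge> 1"
  shows "SPE MP u1 u2 T s1 s2"
  unfolding SPE_def
proof (intro allI impI)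
  fix h :: "('a \<times> 'b) list"
  assume h: "length h < T"
  have pure1: "\<And>g. s1 g \<in> range return_pmf" and pure2: "\<And>g. s2 g \<in> range return_pmf"
    using SPE_PP_pure[OF spe \<open>T \<ge> 1\<close>] by auto
  have dev: "val u1 s1' (\<lambda>g. s2 (h @ g)) [] (T - length h)
      \<le> val u1 (\<lambda>g. s1 (h @ g)) (\<lambda>g. s2 (h @ g)) [] (T - length h)" for s1'
  proof -
    define s1'' where "s1'' = (\<lambda>g. s1' (drop (length h) g))"
    have "val u1 s1'' s2 h (T - length h) \<le> val u1 s1 s2 h (T - length h)"
      using SPE_PP_no_profitable_deviation[OF spe pure1 pure2] h by simp
    moreover have "(\<lambda>g. s1'' (h @ g)) = s1'"
      by (auto simp: s1''_def)
    ultimately show ?thesis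
      using val_eq_continuation[of u1 s1'' s2 h] val_eq_continuation[of u1 s1 s2 h] by simp
  qed
  have "NashRep PP u1 u2 (T - length h) (\<lambda>g. s1 (h @ g)) (\<lambda>g. s2 (h @ g))"
    using spe h unfolding SPE_def by blast
  with dev show "NashRep MP u1 u2 (T - length h) (\<lambda>g. s1 (h @ g)) (\<lambda>g. s2 (h @ g))"
    by (auto simp: NashRep_def strat_ok_def avail_def mixes1_def mixes2_def)
qed

lemma NashStage_MP_pure_imp_PP:
  assumes "(p, q) \<in> NashStage MP u1 u2" and "p \<in> range return_pmf"
  shows "(p, q) \<in> NashStage PP u1 u2"
  using assms by (auto simp: NashStage_def avail_def mixes1_def mixes2_def)

theorem mainTheorem8:
  fixes u1 u2 :: "'a::finite \<Rightarrow> 'b::finite \<Rightarrow> real"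
  assumes "G_LS PP u1 u2"
  shows "G_LS MP u1 u2"
proof -
  obtain T s1 s2 h where T: "T \<ge> 1" and spe: "SPE PP u1 u2 T s1 s2"
    and h: "length h < T" and ls: "(s1 h, s2 h) \<notin> NashStage PP u1 u2"
    using assms unfolding G_LS_def by blast
  have "(s1 h, s2 h) \<notin> NashStage MP u1 u2"
    using ls NashStage_MP_pure_imp_PP SPE_PP_pure(1)[OF spe T] by blast
  then show ?thesis
    using T SPE_PP_imp_SPE_MP[OF spe T] h unfolding G_LS_def by blast
qed

end
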